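(* Let $R$ be a commutative ring, $n\ge 1$, and suppose $\varphi=(1\perp\varepsilon)^t\,\psi_n\,(1\perp\varepsilon)$ for some $\varepsilon\in{\rm E}_{2n-1}(R)$. Then ${\rm E}_\varphi(R)={\rm E}_{2n-1}(R)$.
   Context: All rings are commutative with identity. ${\rm E}_m(R)$ is the subgroup of ${\rm SL}_m(R)$ generated by elementary matrices $I_m+\lambda e_{ij}$ ($i\neq j$, $\lambda\in R$). $\psi_n=\sum_{i=1}^n e_{2i-1,2i}-\sum_{i=1}^n e_{2i,2i-1}$ is the standard $2n\times2n$ symplectic matrix. $1\perp\varepsilon$ denotes $\begin{pmatrix}1&0\\0&\varepsilon\end{pmatrix}$. Elements of $R^m$ are row vectors, ${}^t$ is transpose. For an invertible alternating (i.e. of the form $\nu-\nu^t$) $2n\times2n$ matrix $\varphi$ write $\varphi=\begin{pmatrix}0&-c\\ c^t&\nu\end{pmatrix}$, $\varphi^{-1}=\begin{pmatrix}0&d\\ -d^t&\mu\end{pmatrix}$ with $c,d\in R^{2n-1}$, and set $\alpha_\varphi(v)=I_{2n-1}+d^tv\nu$, $\beta_\varphi(v)=I_{2n-1}+\mu v^tc$ for $v\in R^{2n-1}$. ${\rm E}_\varphi(R)$ is the subgroup of ${\rm GL}_{2n-1}(R)$ generated by all $\alpha_\varphi(v),\beta_\varphi(v)$. *)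

theory Defs
  imports "Jordan_Normal_Form.Matrix"
begin

text \<open>Matrices are JNF matrices; indices are 0-based. Row vectors in R^k are elements
 of carrier_vec k; the outer product x^t y is the k x k matrix with entries x_i y_j.\<close>

definition elem_mat :: "nat \<Rightarrow> nat \<Rightarrow> nat \<Rightarrow> 'a::comm_ring_1 \<Rightarrow> 'a mat" where
  "elem_mat m i j l = mat m m (\<lambda>(r,c). (if r = c then 1 else 0) + (if r = i \<and> c = j then l else 0))"

inductive_set gen_subgroup :: "nat \<Rightarrow> 'a::comm_ring_1 mat set \<Rightarrow> 'a mat set"
  for m :: nat and S :: "'a mat set" where
  gen_one: "1\<^sub>m m \<in> gen_subgroup m S"
| gen_gen: "A \<in> S \<Longrightarrow> A \<in> gen_subgroup m S"
| gen_mult: "A \<in> gen_subgroup m S \<Longrightarrow> B \<in> gen_subgroup m S \<Longrightarrow> A * B \<in> gen_subgroup m S"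
| gen_inv: "A \<in> gen_subgroup m S \<Longrightarrow> B \<in> carrier_mat m m \<Longrightarrow> A * B = 1\<^sub>m m \<Longrightarrow> B * A = 1\<^sub>m m
            \<Longrightarrow> B \<in> gen_subgroup m S"

definition E_group :: "nat \<Rightarrow> 'a::comm_ring_1 mat set" where
  "E_group m = gen_subgroup m {elem_mat m i j l | i j l. i < m \<and> j < m \<and> i \<noteq> j}"

definition psi :: "nat \<Rightarrow> 'a::comm_ring_1 mat" where
  "psi n = mat (2*n) (2*n) (\<lambda>(r,c). if even r \<and> c = r + 1 then 1
                                   else if odd r \<and> r = c + 1 then -1 else 0)"

definition one_perp :: "'a::comm_ring_1 mat \<Rightarrow> 'a mat" where
  "one_perp e = four_block_mat (1\<^sub>m 1) (0\<^sub>m 1 (dim_col e)) (0\<^sub>m (dim_row e) 1) e"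

definition mat_inverse :: "'a::comm_ring_1 mat \<Rightarrow> 'a mat" where
  "mat_inverse A = (SOME B. B \<in> carrier_mat (dim_row A) (dim_row A) \<and>
                          A * B = 1\<^sub>m (dim_row A) \<and> B * A = 1\<^sub>m (dim_row A))"

definition outer :: "'a::comm_ring_1 vec \<Rightarrow> 'a vec \<Rightarrow> 'a mat" where
  "outer x y = mat (dim_vec x) (dim_vec y) (\<lambda>(i,j). x $ i * y $ j)"

text \<open>Blocks of phi = [[0,-c],[c^t,nu]] and phi^{-1} = [[0,d],[-d^t,mu]] (phi is 2n x 2n).\<close>
definition phi_c :: "'a::comm_ring_1 mat \<Rightarrow> 'a vec" where
  "phi_c phi = vec (dim_row phi - 1) (\<lambda>j. - phi $$ (0, j+1))"
definition phi_nu :: "'a::comm_ring_1 mat \<Rightarrow> 'a mat" where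
  "phi_nu phi = mat (dim_row phi - 1) (dim_row phi - 1) (\<lambda>(i,j). phi $$ (i+1, j+1))"
definition phi_d :: "'a::comm_ring_1 mat \<Rightarrow> 'a vec" where
  "phi_d phi = vec (dim_row phi - 1) (\<lambda>j. mat_inverse phi $$ (0, j+1))"
definition phi_mu :: "'a::comm_ring_1 mat \<Rightarrow> 'a mat" where
  "phi_mu phi = mat (dim_row phi - 1) (dim_row phi - 1) (\<lambda>(i,j). mat_inverse phi $$ (i+1, j+1))"

definition alpha :: "'a::comm_ring_1 mat \<Rightarrow> 'a vec \<Rightarrow> 'a mat" where
  "alpha phi v = 1\<^sub>m (dim_row phi - 1) + outer (phi_d phi) v * phi_nu phi"
definition beta :: "'a::comm_ring_1 mat \<Rightarrow> 'a vec \<Rightarrow> 'a mat" where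
  "beta phi v = 1\<^sub>m (dim_row phi - 1) + phi_mu phi * outer v (phi_c phi)"

definition E_phi :: "'a::comm_ring_1 mat \<Rightarrow> 'a mat set" where
  "E_phi phi = gen_subgroup (dim_row phi - 1)
     ({alpha phi v | v. v \<in> carrier_vec (dim_row phi - 1)} \<union>
      {beta phi v | v. v \<in> carrier_vec (dim_row phi - 1)})"

end

theory Submission
  imports Defs
begin

text \<open>Let \<open>e\<^sub>0\<close> be the first unit row and \<open>\<Psi>\<close> the matrix \<open>\<psi>\<^sub>n\<close> with its first row and
  column removed, so \<open>\<psi>\<^sub>n = [[0, e\<^sub>0], [-e\<^sub>0\<^sup>t, \<Psi>]]\<close>; comparing blocks in \<open>\<psi>\<^sub>n\<^sup>2 = -1\<close> gives
  \<open>e\<^sub>0\<Psi> = 0\<close>, \<open>\<Psi>e\<^sub>0\<^sup>t = 0\<close> and \<open>\<Psi>\<^sup>2 = e\<^sub>0\<^sup>te\<^sub>0 - 1\<close>. For \<open>\<phi> = (1\<perp>\<epsilon>)\<^sup>t\<psi>\<^sub>n(1\<perp>\<epsilon>)\<close> this yields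
  \<open>c = -e\<^sub>0\<epsilon>\<close>, \<open>\<nu> = \<epsilon>\<^sup>t\<Psi>\<epsilon>\<close>, \<open>d = -e\<^sub>0\<epsilon>\<^sup>-\<^sup>t\<close>, \<open>\<mu> = -\<epsilon>\<^sup>-\<^sup>1\<Psi>\<epsilon>\<^sup>-\<^sup>t\<close>, hence
  \<open>\<alpha>\<^sub>\<phi>(v) = \<epsilon>\<^sup>-\<^sup>1(1 + e\<^sub>0\<^sup>tw)\<epsilon>\<close> with \<open>w = -v\<epsilon>\<^sup>t\<Psi>\<close> and \<open>\<beta>\<^sub>\<phi>(v) = \<epsilon>\<^sup>-\<^sup>1(1 + ue\<^sub>0)\<epsilon>\<close> with
  \<open>u = \<Psi>\<epsilon>\<^sup>-\<^sup>tv\<^sup>t\<close>. As \<open>we\<^sub>0\<^sup>t = 0\<close> and \<open>e\<^sub>0u = 0\<close>, these are conjugates of first-row and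
  first-column transvections, which are products of elementary matrices. Conversely, since
  \<open>\<Psi>\<^sup>2 = e\<^sub>0\<^sup>te\<^sub>0 - 1\<close>, every elementary matrix in the first row or column is reached in this way,
  and these generate \<open>E\<^sub>2\<^sub>n\<^sub>-\<^sub>1\<close> by the commutator formula. So \<open>E\<^sub>\<phi> = \<epsilon>\<^sup>-\<^sup>1E\<^sub>2\<^sub>n\<^sub>-\<^sub>1\<epsilon>\<close>,
  which is \<open>E\<^sub>2\<^sub>n\<^sub>-\<^sub>1\<close> because \<open>\<epsilon>\<close> lies in it.\<close>

text \<open>The ring laws of matrices with their carrier hypotheses replaced by equations between
  dimensions, which the simplifier discharges by computing dimensions. Together they turn most
  matrix identities below into a single call of the simplifier.\<close>

lemma assoc_mult_mat_dim:
  "dim_col A = dim_row B \<Longrightarrow> dim_col B = dim_row C \<Longrightarrow> A * B * C = A * (B * (C :: 'a::semiring_0 mat))"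
  by (rule assoc_mult_mat[OF carrier_matI carrier_matI carrier_matI]) auto

lemma add_mult_distrib_mat_dim:
  "dim_row A = dim_row B \<Longrightarrow> dim_col A = dim_row C \<Longrightarrow> dim_col B = dim_row C \<Longrightarrow>
   (A + B) * C = A * C + B * (C :: 'a::semiring_0 mat)"
  by (rule add_mult_distrib_mat[OF carrier_matI carrier_matI carrier_matI]) auto

lemma mult_add_distrib_mat_dim:
  "dim_col A = dim_row B \<Longrightarrow> dim_row B = dim_row C \<Longrightarrow> dim_col B = dim_col C \<Longrightarrow>
   A * (B + C) = A * B + A * (C :: 'a::semiring_0 mat)"
  by (rule mult_add_distrib_mat[OF carrier_matI carrier_matI carrier_matI]) auto

lemma minus_mult_distrib_mat_dim:
  "dim_row A = dim_row B \<Longrightarrow> dim_col A = dim_row C \<Longrightarrow> dim_col B = dim_row C \<Longrightarrow>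
   (A - B) * C = A * C - B * (C :: 'a::ring mat)"
  by (rule minus_mult_distrib_mat[OF carrier_matI carrier_matI carrier_matI]) auto

lemma mult_minus_distrib_mat_dim:
  "dim_col A = dim_row B \<Longrightarrow> dim_row B = dim_row C \<Longrightarrow> dim_col B = dim_col C \<Longrightarrow>
   A * (B - C) = A * B - A * (C :: 'a::ring mat)"
  by (rule mult_minus_distrib_mat[OF carrier_matI carrier_matI carrier_matI]) auto

text \<open>Applies a known product \<open>A * B = C\<close> inside the right-nested normal form produced by
  \<open>assoc_mult_mat_dim\<close>.\<close>

lemma mult_mat_assoc_rewrite:
  "A * B = C \<Longrightarrow> dim_col A = dim_row B \<Longrightarrow> dim_col B = dim_row X \<Longrightarrow>
   A * (B * X) = C * (X :: 'a::semiring_0 mat)"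
  by (metis assoc_mult_mat_dim)

lemma uminus_zero_mat [simp]: "- 0\<^sub>m nr nc = (0\<^sub>m nr nc :: 'a::group_add mat)"
  by (rule eq_matI) auto

lemma zero_minus_mat [simp]:
  "dim_row A = nr \<Longrightarrow> dim_col A = nc \<Longrightarrow> 0\<^sub>m nr nc - A = - (A :: 'a::group_add mat)"
  by (rule eq_matI) auto

lemma transpose_mult_dim:
  "dim_col A = dim_row B \<Longrightarrow> transpose_mat (A * B) = transpose_mat B * transpose_mat (A :: 'a::comm_semiring_0 mat)"
  by (rule transpose_mult[OF carrier_matI carrier_matI]) auto

lemma transpose_add_dim:
  "dim_row A = dim_row B \<Longrightarrow> dim_col A = dim_col B \<Longrightarrow>
   transpose_mat (A + B) = transpose_mat A + transpose_mat (B :: 'a::monoid_add mat)"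
  by (rule transpose_add[OF carrier_matI carrier_matI]) auto

lemmas mat_ring_dim_simps =
  assoc_mult_mat_dim add_mult_distrib_mat_dim mult_add_distrib_mat_dim
  minus_mult_distrib_mat_dim mult_minus_distrib_mat_dim transpose_mult_dim transpose_add_dim

lemma index_mult_mat_sum:
  assumes "A \<in> carrier_mat nr k" "B \<in> carrier_mat k nc" "a < nr" "b < nc"
  shows "(A * B) $$ (a,b) = (\<Sum>t<k. A $$ (a,t) * B $$ (t,b))"
  using assms by (auto simp: scalar_prod_def lessThan_atLeast0 intro!: sum.cong)

lemma mat_inverse_eqI:
  assumes A: "A \<in> carrier_mat N N" and B: "B \<in> carrier_mat N N"
    and AB: "A * B = 1\<^sub>m N" and BA: "B * A = 1\<^sub>m N"
  shows "mat_inverse A = B"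
proof -
  have "\<exists>C. C \<in> carrier_mat N N \<and> A * C = 1\<^sub>m N \<and> C * A = 1\<^sub>m N"
    using B AB BA by blast
  then have C: "mat_inverse A \<in> carrier_mat N N" "mat_inverse A * A = 1\<^sub>m N"
    using A unfolding mat_inverse_def by (metis (mono_tags, lifting) carrier_matD(1) someI_ex)+
  have "mat_inverse A = mat_inverse A * (A * B)" using AB C by simp
  also have "\<dots> = B" using C A B by (simp add: assoc_mult_mat_dim[symmetric])
  finally show ?thesis .
qed

lemma outer_eq_mult: "outer x y = transpose_mat (mat_of_row x) * mat_of_row y"
  by (rule eq_matI) (auto simp: outer_def mat_of_row_def scalar_prod_def)

lemma mat_of_row_row_0: "B \<in> carrier_mat 1 m \<Longrightarrow> mat_of_row (row B 0) = B"
  by (rule eq_matI) auto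

lemma transpose_mat_of_row_col_0: "B \<in> carrier_mat m 1 \<Longrightarrow> transpose_mat (mat_of_row (col B 0)) = B"
  by (rule eq_matI) auto

lemma four_block_mat_eqD:
  assumes "four_block_mat A B C D = four_block_mat A' B' C' D'"
    and "A \<in> carrier_mat nr1 nc1" "B \<in> carrier_mat nr1 nc2" "C \<in> carrier_mat nr2 nc1" "D \<in> carrier_mat nr2 nc2"
    and "A' \<in> carrier_mat nr1 nc1" "B' \<in> carrier_mat nr1 nc2" "C' \<in> carrier_mat nr2 nc1" "D' \<in> carrier_mat nr2 nc2"
  shows "A = A'" "B = B'" "C = C'" "D = D'"
proof -
  have ix: "four_block_mat A B C D $$ (i,j) = four_block_mat A' B' C' D' $$ (i,j)" for i j
    using assms(1) by simp
  show "A = A'"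
  proof (rule eq_matI)
    fix i j assume "i < dim_row A'" "j < dim_col A'"
    then show "A $$ (i,j) = A' $$ (i,j)" using ix[of i j] assms(2-) by auto
  qed (use assms in auto)
  show "B = B'"
  proof (rule eq_matI)
    fix i j assume "i < dim_row B'" "j < dim_col B'"
    then show "B $$ (i,j) = B' $$ (i,j)" using ix[of i "nc1 + j"] assms(2-) by auto
  qed (use assms in auto)
  show "C = C'"
  proof (rule eq_matI)
    fix i j assume "i < dim_row C'" "j < dim_col C'"
    then show "C $$ (i,j) = C' $$ (i,j)" using ix[of "nr1 + i" j] assms(2-) by auto
  qed (use assms in auto)
  show "D = D'"
  proof (rule eq_matI)
    fix i j assume "i < dim_row D'" "j < dim_col D'"
    then show "D $$ (i,j) = D' $$ (i,j)" using ix[of "nr1 + i" "nc1 + j"] assms(2-) by auto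
  qed (use assms in auto)
qed

lemma gen_subgroup_carrier:
  assumes "S \<subseteq> carrier_mat m m" "A \<in> gen_subgroup m S"
  shows "A \<in> carrier_mat m m"
  using assms(2) by (induction rule: gen_subgroup.induct) (use assms(1) in auto)

lemma gen_subgroup_least:
  assumes "S \<subseteq> gen_subgroup m T"
  shows "gen_subgroup m S \<subseteq> gen_subgroup m T"
proof
  fix A assume "A \<in> gen_subgroup m S"
  then show "A \<in> gen_subgroup m T"
    by (induction rule: gen_subgroup.induct) (use assms in \<open>auto intro: gen_subgroup.intros\<close>)
qed

lemma gen_subgroup_conjugate:
  assumes P: "P \<in> carrier_mat m m" and Q: "Q \<in> carrier_mat m m"
    and QP: "Q * P = 1\<^sub>m m" and PQ: "P * Q = 1\<^sub>m m"
    and S: "S \<subseteq> carrier_mat m m"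
    and gens: "\<And>X. X \<in> S \<Longrightarrow> Q * X * P \<in> gen_subgroup m T"
    and A: "A \<in> gen_subgroup m S"
  shows "Q * A * P \<in> gen_subgroup m T"
  using A
proof (induction rule: gen_subgroup.induct)
  case gen_one
  then show ?case using Q P QP by (simp add: gen_subgroup.gen_one)
next
  case (gen_gen A)
  then show ?case using gens by auto
next
  case (gen_mult A B)
  have "A \<in> carrier_mat m m" "B \<in> carrier_mat m m"
    using gen_subgroup_carrier[OF S] gen_mult.hyps by auto
  then have "Q * (A * B) * P = (Q * A * P) * (Q * B * P)"
    using P Q by (simp add: mat_ring_dim_simps mult_mat_assoc_rewrite[OF PQ])
  then show ?case using gen_mult.IH by (simp add: gen_subgroup.gen_mult)
next
  case (gen_inv A B)
  have "A \<in> carrier_mat m m" using gen_subgroup_carrier[OF S] gen_inv.hyps by auto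
  then have "(Q * A * P) * (Q * B * P) = 1\<^sub>m m" "(Q * B * P) * (Q * A * P) = 1\<^sub>m m"
    using P Q gen_inv.hyps(2-4) by (simp_all add: mat_ring_dim_simps mult_mat_assoc_rewrite[OF PQ]
      mult_mat_assoc_rewrite[OF gen_inv.hyps(3)] mult_mat_assoc_rewrite[OF gen_inv.hyps(4)] QP)
  then show ?case
    by (rule gen_subgroup.gen_inv[OF gen_inv.IH, rotated]) (use gen_inv.hyps(2) P Q in auto)
qed

lemma index_elem_mat:
  "a < m \<Longrightarrow> b < m \<Longrightarrow>
   elem_mat m i j l $$ (a,b) = (if a = b then 1 else 0) + (if a = i \<and> b = j then l else 0)"
  unfolding elem_mat_def by auto

lemma elem_mat_carrier [simp]: "elem_mat m i j l \<in> carrier_mat m m"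
  and dim_elem_mat [simp]: "dim_row (elem_mat m i j l) = m" "dim_col (elem_mat m i j l) = m"
  unfolding elem_mat_def by auto

lemma index_mult_elem_mat_right:
  assumes A: "A \<in> carrier_mat m m" and "i < m" "j < m" "a < m" "b < m"
  shows "(A * elem_mat m i j l) $$ (a,b) = A $$ (a,b) + (if b = j then A $$ (a,i) * l else 0)"
proof -
  have "(A * elem_mat m i j l) $$ (a,b)
      = (\<Sum>k<m. (if k = b then A $$ (a,k) else 0) + (if k = i \<and> b = j then A $$ (a,k) * l else 0))"
    using assms by (auto simp: index_mult_mat_sum[OF A elem_mat_carrier] index_elem_mat distrib_left
      simp del: index_mult_mat(1) intro!: sum.cong)
  also have "\<dots> = A $$ (a,b) + (if b = j then A $$ (a,i) * l else 0)"
    using assms by (simp add: sum.distrib sum.delta' if_distrib[of "\<lambda>x. x * l"] conj_commute)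
  finally show ?thesis .
qed

lemma transpose_elem_mat: "transpose_mat (elem_mat m i j l) = elem_mat m j i l"
  by (rule eq_matI) (auto simp: elem_mat_def)

lemma elem_mat_mult_inverse:
  assumes "i < m" "j < m" "i \<noteq> j"
  shows "elem_mat m i j l * elem_mat m i j (- l) = 1\<^sub>m m"
  by (rule eq_matI) (use assms in \<open>auto simp: index_mult_elem_mat_right[OF elem_mat_carrier] index_elem_mat
      simp del: index_mult_mat(1)\<close>)

lemma elem_mat_commutator:
  assumes "0 < i" "i < m" "0 < j" "j < m" "i \<noteq> j"
  shows "elem_mat m i j l = elem_mat m i 0 l * elem_mat m 0 j 1 * elem_mat m i 0 (- l) * elem_mat m 0 j (- 1)"
  by (rule eq_matI)
    (use assms in \<open>auto simp: index_mult_elem_mat_right[OF carrier_matI] index_elem_mat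
      simp del: index_mult_mat(1)\<close>)

lemma E_group_carrier: "A \<in> E_group m \<Longrightarrow> A \<in> carrier_mat m m"
  unfolding E_group_def by (rule gen_subgroup_carrier) auto

lemma elem_mat_in_E_group: "i < m \<Longrightarrow> j < m \<Longrightarrow> i \<noteq> j \<Longrightarrow> elem_mat m i j l \<in> E_group m"
  unfolding E_group_def by (rule gen_subgroup.gen_gen) auto

lemma one_in_E_group: "1\<^sub>m m \<in> E_group m"
  unfolding E_group_def by (rule gen_subgroup.gen_one)

lemma E_group_mult: "A \<in> E_group m \<Longrightarrow> B \<in> E_group m \<Longrightarrow> A * B \<in> E_group m"
  unfolding E_group_def by (rule gen_subgroup.gen_mult)

lemma E_group_inverse:
  assumes "A \<in> E_group m"
  shows "\<exists>B \<in> E_group m. A * B = 1\<^sub>m m \<and> B * A = 1\<^sub>m m"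
  using assms unfolding E_group_def
proof (induction rule: gen_subgroup.induct)
  case gen_one
  then show ?case by (auto intro!: bexI[of _ "1\<^sub>m m"] gen_subgroup.gen_one)
next
  case (gen_gen A)
  then obtain i j l where "A = elem_mat m i j l" "i < m" "j < m" "i \<noteq> j" by auto
  then show ?case
    using elem_mat_mult_inverse[of i m j l] elem_mat_mult_inverse[of i m j "- l"]
    by (auto intro!: bexI[of _ "elem_mat m i j (- l)"] gen_subgroup.gen_gen)
next
  case (gen_mult A B)
  let ?S = "{elem_mat m i j l | i j l. i < m \<and> j < m \<and> i \<noteq> j}"
  from gen_mult.IH obtain A' B' where
    A': "A' \<in> gen_subgroup m ?S" "A * A' = 1\<^sub>m m" "A' * A = 1\<^sub>m m" and
    B': "B' \<in> gen_subgroup m ?S" "B * B' = 1\<^sub>m m" "B' * B = 1\<^sub>m m"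
    by blast
  have "A \<in> carrier_mat m m" "B \<in> carrier_mat m m" "A' \<in> carrier_mat m m" "B' \<in> carrier_mat m m"
    using gen_mult.hyps A'(1) B'(1) by (auto elim!: gen_subgroup_carrier[rotated])
  then have "A * B * (B' * A') = 1\<^sub>m m" "B' * A' * (A * B) = 1\<^sub>m m"
    using A'(2,3) B'(2,3)
    by (simp_all add: assoc_mult_mat_dim mult_mat_assoc_rewrite[OF B'(2)] mult_mat_assoc_rewrite[OF A'(3)])
  then show ?case using A'(1) B'(1) by (auto intro!: bexI[of _ "B' * A'"] gen_subgroup.gen_mult)
next
  case (gen_inv A B)
  then show ?case by blast
qed

lemma E_group_transpose:
  assumes "A \<in> E_group m"
  shows "transpose_mat A \<in> E_group m"
  using assms unfolding E_group_def
proof (induction rule: gen_subgroup.induct)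
  case gen_one
  then show ?case by (auto intro: gen_subgroup.gen_one)
next
  case (gen_gen A)
  then obtain i j l where "A = elem_mat m i j l" "i < m" "j < m" "i \<noteq> j" by auto
  then show ?case
    using elem_mat_in_E_group[of j m i l] by (simp add: transpose_elem_mat E_group_def)
next
  case (gen_mult A B)
  have "A \<in> carrier_mat m m" "B \<in> carrier_mat m m"
    using gen_mult.hyps by (auto elim!: gen_subgroup_carrier[rotated])
  then show ?case
    using gen_mult.IH by (simp add: transpose_mult gen_subgroup.gen_mult)
next
  case (gen_inv A B)
  have "A \<in> carrier_mat m m" using gen_inv.hyps by (auto elim!: gen_subgroup_carrier[rotated])
  then have "transpose_mat A * transpose_mat B = 1\<^sub>m m" "transpose_mat B * transpose_mat A = 1\<^sub>m m"
    using gen_inv.hyps(2-4) by (metis transpose_mult transpose_one)+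
  then show ?case
    by (rule gen_subgroup.gen_inv[OF gen_inv.IH, rotated]) (use gen_inv.hyps(2) in auto)
qed

definition first_line_elem_mats :: "nat \<Rightarrow> 'a::comm_ring_1 mat set" where
  "first_line_elem_mats m =
     {elem_mat m 0 j l | j l. 0 < j \<and> j < m} \<union> {elem_mat m i 0 l | i l. 0 < i \<and> i < m}"

lemma E_group_eq_gen_first_line: "E_group m = gen_subgroup m (first_line_elem_mats m)"
proof
  let ?S = "first_line_elem_mats m :: 'a mat set"
  have "elem_mat m i j l \<in> gen_subgroup m ?S" if "i < m" "j < m" "i \<noteq> j" for i j and l :: 'a
  proof (cases "i = 0 \<or> j = 0")
    case True
    then show ?thesis
      using that by (auto simp: first_line_elem_mats_def intro!: gen_subgroup.gen_gen)
  next
    case False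
    have "elem_mat m i 0 l' \<in> gen_subgroup m ?S" "elem_mat m 0 j l' \<in> gen_subgroup m ?S" for l'
      using that False by (auto simp: first_line_elem_mats_def intro!: gen_subgroup.gen_gen)
    then show ?thesis
      using that False by (simp add: elem_mat_commutator gen_subgroup.gen_mult)
  qed
  then show "E_group m \<subseteq> gen_subgroup m ?S"
    unfolding E_group_def by (intro gen_subgroup_least) blast
  have "?S \<subseteq> E_group m"
    by (auto simp: first_line_elem_mats_def intro!: elem_mat_in_E_group)
  then show "gen_subgroup m ?S \<subseteq> E_group m"
    unfolding E_group_def by (rule gen_subgroup_least)
qed

definition first_unit_row :: "nat \<Rightarrow> 'a::comm_ring_1 mat" where
  "first_unit_row m = mat_of_row (unit_vec m 0)"

lemma first_unit_row_carrier [simp]: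
    "first_unit_row m \<in> carrier_mat 1 m" "first_unit_row m \<in> carrier_mat (Suc 0) m"
  and dim_first_unit_row [simp]: "dim_row (first_unit_row m) = 1" "dim_col (first_unit_row m) = m"
  unfolding first_unit_row_def by auto

lemma index_first_unit_row [simp]: "b < m \<Longrightarrow> first_unit_row m $$ (0,b) = (if b = 0 then 1 else 0)"
  unfolding first_unit_row_def by simp

lemma first_row_transvection_upto_in_E_group:
  "mat m m (\<lambda>(a,b). (if a = b then 1 else 0) + (if a = 0 \<and> 0 < b \<and> b < k then f b else 0))
   \<in> E_group m"
proof (induction k)
  case 0
  have "mat m m (\<lambda>(a,b). (if a = b then 1 else 0) + (if a = 0 \<and> 0 < b \<and> b < 0 then f b else 0))
    = 1\<^sub>m m"
    by (rule eq_matI) auto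
  then show ?case by (simp add: one_in_E_group)
next
  case (Suc k)
  let ?M = "\<lambda>k. mat m m (\<lambda>(a,b). (if a = b then 1 else 0) + (if a = 0 \<and> 0 < b \<and> b < k then f b else 0))"
  show ?case
  proof (cases "k = 0 \<or> m \<le> k")
    case True
    then have "?M (Suc k) = ?M k" by (intro eq_matI) auto
    then show ?thesis using Suc by simp
  next
    case False
    then have "?M (Suc k) = ?M k * elem_mat m 0 k (f k)"
      by (intro eq_matI) (auto simp: index_mult_elem_mat_right[OF carrier_matI] simp del: index_mult_mat(1))
    then show ?thesis using Suc False by (simp add: E_group_mult elem_mat_in_E_group)
  qed
qed

lemma first_row_transvection_in_E_group:
  assumes W: "W \<in> carrier_mat 1 m" and W_r: "W * transpose_mat (first_unit_row m) = 0\<^sub>m 1 1"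
  shows "1\<^sub>m m + transpose_mat (first_unit_row m) * W \<in> E_group m"
proof -
  have "W $$ (0,0) = 0" if "0 < m"
    using arg_cong[OF W_r, of "\<lambda>A. A $$ (0,0)"] W that
    by (auto simp: scalar_prod_def first_unit_row_def of_bool_def[symmetric])
  then have "1\<^sub>m m + transpose_mat (first_unit_row m) * W
    = mat m m (\<lambda>(a,b). (if a = b then 1 else 0) + (if a = 0 \<and> 0 < b \<and> b < m then W $$ (0,b) else 0))"
    using W by (intro eq_matI) (auto simp: scalar_prod_def)
  then show ?thesis by (simp add: first_row_transvection_upto_in_E_group)
qed

lemma first_col_transvection_in_E_group:
  assumes U: "U \<in> carrier_mat m 1" and r_U: "first_unit_row m * U = 0\<^sub>m 1 1"
  shows "1\<^sub>m m + U * first_unit_row m \<in> E_group m"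
proof -
  have "transpose_mat U * transpose_mat (first_unit_row m) = 0\<^sub>m 1 1"
    using U r_U transpose_mult[of "first_unit_row m" 1 m U 1] by simp
  then have "transpose_mat (1\<^sub>m m + transpose_mat (first_unit_row m) * transpose_mat U) \<in> E_group m"
    using U by (intro E_group_transpose first_row_transvection_in_E_group) auto
  moreover have "transpose_mat (1\<^sub>m m + transpose_mat (first_unit_row m) * transpose_mat U)
    = 1\<^sub>m m + U * first_unit_row m"
    using U by (simp add: mat_ring_dim_simps)
  ultimately show ?thesis by simp
qed

lemma elem_mat_first_row:
  "elem_mat m 0 j l = 1\<^sub>m m + transpose_mat (first_unit_row m) * mat_of_row (l \<cdot>\<^sub>v unit_vec m j)"
  by (rule eq_matI) (auto simp: elem_mat_def scalar_prod_def unit_vec_def)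

lemma elem_mat_first_col:
  "elem_mat m i 0 l = 1\<^sub>m m + transpose_mat (mat_of_row (l \<cdot>\<^sub>v unit_vec m i)) * first_unit_row m"
proof -
  have "elem_mat m i 0 l = transpose_mat (elem_mat m 0 i l)" by (simp add: transpose_elem_mat)
  also have "\<dots> = 1\<^sub>m m + transpose_mat (mat_of_row (l \<cdot>\<^sub>v unit_vec m i)) * first_unit_row m"
    by (simp add: elem_mat_first_row mat_ring_dim_simps)
  finally show ?thesis .
qed

text \<open>\<open>phi\<close> is \<open>(1\<perp>\<epsilon>)\<^sup>t\<psi>\<^sub>n(1\<perp>\<epsilon>)\<close> in block form, with \<open>Psi\<close> the lower right block of
  \<open>\<psi>\<^sub>n\<close> and \<open>epsi = \<epsilon>\<^sup>-\<^sup>1\<close>.\<close>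

locale congruent_standard_form =
  fixes m :: nat and eps epsi Psi phi :: "'a::comm_ring_1 mat"
  assumes eps_carrier [simp]: "eps \<in> carrier_mat m m"
    and epsi_carrier [simp]: "epsi \<in> carrier_mat m m"
    and eps_epsi: "eps * epsi = 1\<^sub>m m"
    and epsi_eps: "epsi * eps = 1\<^sub>m m"
    and eps_in_E_group: "eps \<in> E_group m"
    and Psi_carrier [simp]: "Psi \<in> carrier_mat m m"
    and e0_Psi: "first_unit_row m * Psi = 0\<^sub>m 1 m"
    and Psi_e0: "Psi * transpose_mat (first_unit_row m) = 0\<^sub>m m 1"
    and Psi_squared: "Psi * Psi = transpose_mat (first_unit_row m) * first_unit_row m - 1\<^sub>m m"
    and phi_eq: "phi = four_block_mat (0\<^sub>m 1 1) (first_unit_row m * eps)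
      (- (transpose_mat eps * transpose_mat (first_unit_row m))) (transpose_mat eps * Psi * eps)"
    and phi_inverse_eq: "mat_inverse phi = - four_block_mat (0\<^sub>m 1 1) (first_unit_row m * transpose_mat epsi)
      (- (epsi * transpose_mat (first_unit_row m))) (epsi * Psi * transpose_mat epsi)"
begin

abbreviation e0 :: "'a mat" where "e0 \<equiv> first_unit_row m"

lemmas dim_eps [simp] = carrier_matD[OF eps_carrier]
lemmas dim_epsi [simp] = carrier_matD[OF epsi_carrier]
lemmas dim_Psi [simp] = carrier_matD[OF Psi_carrier]

lemma epsi_in_E_group: "epsi \<in> E_group m"
proof -
  obtain B where B: "B \<in> E_group m" "eps * B = 1\<^sub>m m"
    using E_group_inverse[OF eps_in_E_group] by blast
  have "B \<in> carrier_mat m m" using B(1) by (rule E_group_carrier)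
  then have "epsi = B"
    using mult_mat_assoc_rewrite[OF epsi_eps, of B] B(2) by simp
  then show ?thesis using B(1) by simp
qed

lemma dim_phi: "dim_row phi = Suc m"
  unfolding phi_eq by simp

lemma phi_nu_eq: "phi_nu phi = transpose_mat eps * Psi * eps"
  unfolding phi_nu_def dim_phi by (rule eq_matI) (auto simp: phi_eq simp del: index_mult_mat(1))

lemma phi_mu_eq: "phi_mu phi = - (epsi * Psi * transpose_mat epsi)"
  unfolding phi_mu_def dim_phi phi_inverse_eq by (rule eq_matI) (auto simp del: index_mult_mat(1))

lemma mat_of_row_phi_c: "mat_of_row (phi_c phi) = - (e0 * eps)"
  unfolding phi_c_def dim_phi by (rule eq_matI) (auto simp: phi_eq simp del: index_mult_mat(1))

lemma mat_of_row_phi_d: "mat_of_row (phi_d phi) = - (e0 * transpose_mat epsi)"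
  unfolding phi_d_def dim_phi phi_inverse_eq by (rule eq_matI) (auto simp del: index_mult_mat(1))

lemma alpha_eq_conjugate:
  assumes "v \<in> carrier_vec m"
  shows "alpha phi v = epsi * (1\<^sub>m m + transpose_mat e0 * - (mat_of_row v * transpose_mat eps * Psi)) * eps"
  using assms
  by (simp add: alpha_def dim_phi outer_eq_mult phi_nu_eq mat_of_row_phi_d transpose_uminus
      mat_ring_dim_simps epsi_eps)

lemma beta_eq_conjugate:
  assumes "v \<in> carrier_vec m"
  shows "beta phi v = epsi * (1\<^sub>m m + Psi * transpose_mat epsi * transpose_mat (mat_of_row v) * e0) * eps"
  using assms
  by (simp add: beta_def dim_phi outer_eq_mult phi_mu_eq mat_of_row_phi_c transpose_uminus
      mat_ring_dim_simps epsi_eps)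

lemma alpha_in_E_group:
  assumes v: "v \<in> carrier_vec m"
  shows "alpha phi v \<in> E_group m"
proof -
  let ?W = "- (mat_of_row v * transpose_mat eps * Psi)"
  have "?W * transpose_mat e0 = 0\<^sub>m 1 1"
    using v by (simp add: mat_ring_dim_simps Psi_e0)
  then have "1\<^sub>m m + transpose_mat e0 * ?W \<in> E_group m"
    using v by (intro first_row_transvection_in_E_group) auto
  then show ?thesis
    unfolding alpha_eq_conjugate[OF v] by (intro E_group_mult epsi_in_E_group eps_in_E_group)
qed

lemma beta_in_E_group:
  assumes v: "v \<in> carrier_vec m"
  shows "beta phi v \<in> E_group m"
proof -
  let ?U = "Psi * transpose_mat epsi * transpose_mat (mat_of_row v)"
  have "e0 * ?U = 0\<^sub>m 1 1"
    using v by (simp add: mat_ring_dim_simps mult_mat_assoc_rewrite[OF e0_Psi])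
  then have "1\<^sub>m m + ?U * e0 \<in> E_group m"
    using v by (intro first_col_transvection_in_E_group) auto
  then show ?thesis
    unfolding beta_eq_conjugate[OF v] by (intro E_group_mult epsi_in_E_group eps_in_E_group)
qed

lemma E_phi_subset_E_group: "E_phi phi \<subseteq> E_group m"
proof -
  have "{alpha phi v | v. v \<in> carrier_vec m} \<union> {beta phi v | v. v \<in> carrier_vec m} \<subseteq> E_group m"
    using alpha_in_E_group beta_in_E_group by blast
  then show ?thesis
    unfolding E_phi_def dim_phi E_group_def by (simp add: gen_subgroup_least)
qed

lemma transpose_epsi_eps: "transpose_mat epsi * transpose_mat eps = 1\<^sub>m m"
  using eps_epsi by (metis transpose_mult_dim transpose_one dim_eps(2) dim_epsi(1))

lemma conjugate_first_row_elem_mat_eq_alpha: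
  assumes "0 < j"
  shows "\<exists>v \<in> carrier_vec m. alpha phi v = epsi * elem_mat m 0 j l * eps"
proof -
  let ?E = "mat_of_row (l \<cdot>\<^sub>v unit_vec m j)"
  \<comment> \<open>as \<open>\<Psi>\<^sup>2 = e\<^sub>0\<^sup>te\<^sub>0 - 1\<close> and \<open>E e\<^sub>0\<^sup>t = 0\<close>, this \<open>v\<close> gives \<open>-v\<epsilon>\<^sup>t\<Psi> = E\<close>\<close>
  let ?v = "row (?E * Psi * transpose_mat epsi) 0"
  have E_e0: "?E * transpose_mat e0 = 0\<^sub>m 1 1"
    using assms by (intro eq_matI) (auto simp: first_unit_row_def scalar_prod_def unit_vec_def intro!: sum.neutral)
  have "mat_of_row ?v = ?E * Psi * transpose_mat epsi"
    by (rule mat_of_row_row_0[OF carrier_matI]) simp_all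
  then have "- (mat_of_row ?v * transpose_mat eps * Psi) = ?E"
    by (simp add: mat_ring_dim_simps Psi_squared mult_mat_assoc_rewrite[OF transpose_epsi_eps]
        mult_mat_assoc_rewrite[OF E_e0])
  moreover have v: "?v \<in> carrier_vec m" by (rule carrier_vecI) simp
  ultimately have "alpha phi ?v = epsi * elem_mat m 0 j l * eps"
    unfolding alpha_eq_conjugate[OF v] elem_mat_first_row by simp
  with v show ?thesis by blast
qed

lemma conjugate_first_col_elem_mat_eq_beta:
  assumes "0 < i"
  shows "\<exists>v \<in> carrier_vec m. beta phi v = epsi * elem_mat m i 0 l * eps"
proof -
  let ?F = "transpose_mat (mat_of_row (l \<cdot>\<^sub>v unit_vec m i))"
  let ?v = "col (- (transpose_mat eps * Psi * ?F)) 0"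
  have e0_F: "e0 * ?F = 0\<^sub>m 1 1"
    using assms by (intro eq_matI) (auto simp: first_unit_row_def scalar_prod_def unit_vec_def intro!: sum.neutral)
  have "transpose_mat (mat_of_row ?v) = - (transpose_mat eps * Psi * ?F)"
    by (rule transpose_mat_of_row_col_0[OF carrier_matI]) simp_all
  then have "Psi * transpose_mat epsi * transpose_mat (mat_of_row ?v) = ?F"
    using e0_F by (simp add: mat_ring_dim_simps Psi_squared mult_mat_assoc_rewrite[OF transpose_epsi_eps]
      mult_mat_assoc_rewrite[OF Psi_squared])
  moreover have v: "?v \<in> carrier_vec m" by (rule carrier_vecI) simp
  ultimately have "beta phi ?v = epsi * elem_mat m i 0 l * eps"
    unfolding beta_eq_conjugate[OF v] elem_mat_first_col by simp
  with v show ?thesis by blast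
qed

lemma E_group_subset_E_phi: "E_group m \<subseteq> E_phi phi"
proof
  fix A :: "'a mat" assume A: "A \<in> E_group m"
  let ?T = "{alpha phi v | v. v \<in> carrier_vec m} \<union> {beta phi v | v. v \<in> carrier_vec m}"
  have gens: "epsi * X * eps \<in> gen_subgroup m ?T" if "X \<in> first_line_elem_mats m" for X
  proof -
    from that consider (row) j l where "X = elem_mat m 0 j l" "0 < j"
      | (col) i l where "X = elem_mat m i 0 l" "0 < i"
      unfolding first_line_elem_mats_def by blast
    then have "epsi * X * eps \<in> ?T"
    proof cases
      case row
      then show ?thesis using conjugate_first_row_elem_mat_eq_alpha[of j l] by auto
    next
      case col
      then show ?thesis using conjugate_first_col_elem_mat_eq_beta[of i l] by auto
    qed
    then show ?thesis by (rule gen_subgroup.gen_gen)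
  qed
  have first_line_carrier: "first_line_elem_mats m \<subseteq> carrier_mat m m"
    by (auto simp: first_line_elem_mats_def)
  have "eps * A * epsi \<in> gen_subgroup m (first_line_elem_mats m)"
    using A eps_in_E_group epsi_in_E_group E_group_eq_gen_first_line[of m] by (metis E_group_mult)
  then have "epsi * (eps * A * epsi) * eps \<in> E_phi phi"
    unfolding E_phi_def dim_phi diff_Suc_1
    by (rule gen_subgroup_conjugate[OF eps_carrier epsi_carrier epsi_eps eps_epsi first_line_carrier gens,
          rotated])
  moreover have "epsi * (eps * A * epsi) * eps = A"
    using E_group_carrier[OF A]
    by (simp add: mat_ring_dim_simps mult_mat_assoc_rewrite[OF epsi_eps] epsi_eps)
  ultimately show "A \<in> E_phi phi" by simp
qed

lemma E_phi_eq_E_group: "E_phi phi = E_group m"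
  using E_phi_subset_E_group E_group_subset_E_phi by blast

end

lemma uminus_one_four_block_mat:
  "- 1\<^sub>m (n1 + n2) = four_block_mat (- 1\<^sub>m n1) (0\<^sub>m n1 n2) (0\<^sub>m n2 n1) (- 1\<^sub>m n2 :: 'a::ring_1 mat)"
  by (rule eq_matI) auto

lemma four_block_square_root_of_minus_one:
  fixes r Psi :: "'a::comm_ring_1 mat"
  assumes r: "r \<in> carrier_mat 1 m" and Psi: "Psi \<in> carrier_mat m m"
    and sq: "four_block_mat (0\<^sub>m 1 1) r (- transpose_mat r) Psi * four_block_mat (0\<^sub>m 1 1) r (- transpose_mat r) Psi
             = - 1\<^sub>m (1 + m)"
  shows "r * Psi = 0\<^sub>m 1 m" "Psi * transpose_mat r = 0\<^sub>m m 1"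
    "Psi * Psi = transpose_mat r * r - 1\<^sub>m m"
proof -
  have rT: "transpose_mat r \<in> carrier_mat m 1" using r by simp
  have "four_block_mat (0\<^sub>m 1 1 * 0\<^sub>m 1 1 + r * - transpose_mat r) (0\<^sub>m 1 1 * r + r * Psi)
          (- transpose_mat r * 0\<^sub>m 1 1 + Psi * - transpose_mat r) (- transpose_mat r * r + Psi * Psi)
      = four_block_mat (- 1\<^sub>m 1) (0\<^sub>m 1 m) (0\<^sub>m m 1) (- 1\<^sub>m m)"
    using sq unfolding uminus_one_four_block_mat
    by (subst (asm) mult_four_block_mat[OF zero_carrier_mat r uminus_carrier_mat[OF rT] Psi
        zero_carrier_mat r uminus_carrier_mat[OF rT] Psi])
  note blocks = four_block_mat_eqD[OF this, of 1 1 m m]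
  from blocks(2) show "r * Psi = 0\<^sub>m 1 m" using r Psi by simp
  from blocks(3) have "- (Psi * transpose_mat r) = - 0\<^sub>m m 1" using r Psi by simp
  then show "Psi * transpose_mat r = 0\<^sub>m m 1" by (metis uminus_uminus_mat)
  show "Psi * Psi = transpose_mat r * r - 1\<^sub>m m"
  proof (rule eq_matI)
    fix i j assume "i < dim_row (transpose_mat r * r - 1\<^sub>m m)" "j < dim_col (transpose_mat r * r - 1\<^sub>m m)"
    then show "(Psi * Psi) $$ (i,j) = (transpose_mat r * r - 1\<^sub>m m) $$ (i,j)"
      using arg_cong[OF blocks(4), of "\<lambda>M. M $$ (i,j)"] r Psi
      by (cases "i = j") (simp_all add: algebra_simps)
  qed (use r Psi in auto)
qed

lemma psi_carrier [simp]: "psi n \<in> carrier_mat (2*n) (2*n)"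
  and dim_psi [simp]: "dim_row (psi n) = 2*n" "dim_col (psi n) = 2*n"
  unfolding psi_def by auto

lemma index_psi:
  "i < 2*n \<Longrightarrow> j < 2*n \<Longrightarrow>
   psi n $$ (i,j) = (if even i \<and> j = i + 1 then 1 else if odd i \<and> i = j + 1 then -1 else 0)"
  unfolding psi_def by auto

lemma psi_squared: "psi n * psi n = - (1\<^sub>m (2*n) :: 'a::comm_ring_1 mat)"
proof (rule eq_matI)
  fix i j assume "i < dim_row (- (1\<^sub>m (2*n) :: 'a mat))" "j < dim_col (- (1\<^sub>m (2*n) :: 'a mat))"
  then have ij: "i < 2*n" "j < 2*n" by auto
  have "(psi n * psi n :: 'a mat) $$ (i,j) = (\<Sum>t<2*n. psi n $$ (i,t) * psi n $$ (t,j))"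
    using ij by (intro index_mult_mat_sum) auto
  also have "\<dots> = (\<Sum>t<2*n. if t = (if even i then i + 1 else i - 1)
                               then (if even i then psi n $$ (t,j) else - psi n $$ (t,j)) else 0)"
    using ij by (intro sum.cong) (auto simp: index_psi)
  also have "\<dots> = (- (1\<^sub>m (2*n) :: 'a mat)) $$ (i,j)"
    using ij by (auto simp: index_psi elim!: evenE oddE)
  finally show "(psi n * psi n :: 'a mat) $$ (i,j) = (- (1\<^sub>m (2*n) :: 'a mat)) $$ (i,j)" .
qed auto

definition psi_minor :: "nat \<Rightarrow> 'a::comm_ring_1 mat" where
  "psi_minor n = mat (2*n - 1) (2*n - 1) (\<lambda>(i,j). psi n $$ (i + 1, j + 1))"

lemma psi_minor_carrier [simp]: "psi_minor n \<in> carrier_mat (2*n - 1) (2*n - 1)"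
  unfolding psi_minor_def by auto

lemma psi_four_block:
  assumes "n \<ge> 1"
  shows "psi n = four_block_mat (0\<^sub>m 1 1) (first_unit_row (2*n - 1))
                   (- transpose_mat (first_unit_row (2*n - 1))) (psi_minor n)"
  by (rule eq_matI) (use assms in \<open>auto simp: psi_def psi_minor_def\<close>)

lemma psi_minor_identities:
  assumes "n \<ge> 1"
  shows "first_unit_row (2*n - 1) * psi_minor n = 0\<^sub>m 1 (2*n - 1)"
    "psi_minor n * transpose_mat (first_unit_row (2*n - 1)) = 0\<^sub>m (2*n - 1) 1"
    "psi_minor n * psi_minor n
     = transpose_mat (first_unit_row (2*n - 1)) * first_unit_row (2*n - 1) - 1\<^sub>m (2*n - 1)"
proof -
  have "1 + (2*n - 1) = 2*n" using assms by simp
  then have "four_block_mat (0\<^sub>m 1 1) (first_unit_row (2*n - 1)) (- transpose_mat (first_unit_row (2*n - 1)))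
      (psi_minor n) * four_block_mat (0\<^sub>m 1 1) (first_unit_row (2*n - 1))
      (- transpose_mat (first_unit_row (2*n - 1))) (psi_minor n) = - 1\<^sub>m (1 + (2*n - 1))"
    using psi_squared[of n] by (simp only: psi_four_block[OF assms, symmetric])
  from four_block_square_root_of_minus_one[OF first_unit_row_carrier(1) psi_minor_carrier this]
  show "first_unit_row (2*n - 1) * psi_minor n = 0\<^sub>m 1 (2*n - 1)"
    "psi_minor n * transpose_mat (first_unit_row (2*n - 1)) = 0\<^sub>m (2*n - 1) 1"
    "psi_minor n * psi_minor n
     = transpose_mat (first_unit_row (2*n - 1)) * first_unit_row (2*n - 1) - 1\<^sub>m (2*n - 1)" .
qed

lemma one_perp_carrier [simp]: "X \<in> carrier_mat m m \<Longrightarrow> one_perp X \<in> carrier_mat (Suc m) (Suc m)"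
  unfolding one_perp_def by auto

lemma one_perp_mult:
  assumes "A \<in> carrier_mat m m" "B \<in> carrier_mat m m"
  shows "one_perp A * one_perp B = one_perp (A * B)"
  using assms by (simp add: one_perp_def mult_four_block_mat[of _ 1 1 _ m _ m _ _ 1 _ m])

lemma one_perp_one: "one_perp (1\<^sub>m m) = 1\<^sub>m (Suc m)"
  using four_block_one_mat[of 1 m] by (simp add: one_perp_def)

lemma transpose_one_perp: "X \<in> carrier_mat m m \<Longrightarrow> transpose_mat (one_perp X) = one_perp (transpose_mat X)"
  by (simp add: one_perp_def transpose_four_block_mat[of _ 1 1 _ m _ m])

lemma one_perp_congruence:
  assumes "X \<in> carrier_mat m m" "a \<in> carrier_mat 1 1" "b \<in> carrier_mat 1 m" "c \<in> carrier_mat m 1"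
    "D \<in> carrier_mat m m"
  shows "transpose_mat (one_perp X) * four_block_mat a b c D * one_perp X
       = four_block_mat a (b * X) (transpose_mat X * c) (transpose_mat X * D * X)"
  unfolding transpose_one_perp[OF assms(1)] using assms
  by (simp add: one_perp_def mult_four_block_mat[of _ 1 1 _ m _ m _ _ 1 _ m])

lemma mat_inverse_congruence_of_square_root_of_minus_one:
  assumes P: "P \<in> carrier_mat N N" and Q: "Q \<in> carrier_mat N N"
    and PQ: "P * Q = 1\<^sub>m N" and QP: "Q * P = 1\<^sub>m N"
    and Y: "Y \<in> carrier_mat N N" and YY: "Y * Y = - 1\<^sub>m N"
  shows "mat_inverse (transpose_mat P * Y * P) = - (Q * Y * transpose_mat Q)"
proof (rule mat_inverse_eqI)
  have PQ_T: "transpose_mat Q * transpose_mat P = 1\<^sub>m N" and QP_T: "transpose_mat P * transpose_mat Q = 1\<^sub>m N"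
    using P Q PQ QP by (metis transpose_mult transpose_one)+
  show "transpose_mat P * Y * P * - (Q * Y * transpose_mat Q) = 1\<^sub>m N"
    using P Q Y QP_T by (simp add: mat_ring_dim_simps mult_mat_assoc_rewrite[OF PQ]
        mult_mat_assoc_rewrite[OF YY])
  show "- (Q * Y * transpose_mat Q) * (transpose_mat P * Y * P) = 1\<^sub>m N"
    using P Q Y QP by (simp add: mat_ring_dim_simps mult_mat_assoc_rewrite[OF PQ_T]
        mult_mat_assoc_rewrite[OF YY])
qed (use P Q Y in auto)

lemma psi_congruence_standard_form:
  fixes eps epsi :: "'a::comm_ring_1 mat"
  assumes n: "n \<ge> 1" and eps: "eps \<in> E_group (2*n - 1)" and epsi: "epsi \<in> carrier_mat (2*n - 1) (2*n - 1)"
    and eps_epsi: "eps * epsi = 1\<^sub>m (2*n - 1)" and epsi_eps: "epsi * eps = 1\<^sub>m (2*n - 1)"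
  shows "congruent_standard_form (2*n - 1) eps epsi (psi_minor n)
           (transpose_mat (one_perp eps) * psi n * one_perp eps)"
proof -
  define m where "m = 2*n - 1"
  have Suc_m: "Suc m = 2*n" using n by (simp add: m_def)
  have eps_carrier: "eps \<in> carrier_mat m m" using E_group_carrier[OF eps] by (simp add: m_def)
  have epsi_carrier: "epsi \<in> carrier_mat m m" using epsi by (simp add: m_def)
  have Psi: "psi_minor n \<in> carrier_mat m m" unfolding m_def by (rule psi_minor_carrier)
  have psi: "psi n = four_block_mat (0\<^sub>m 1 1) (first_unit_row m) (- transpose_mat (first_unit_row m)) (psi_minor n)"
    using psi_four_block[OF n] by (simp add: m_def)
  have "one_perp eps * one_perp epsi = 1\<^sub>m (2*n)" "one_perp epsi * one_perp eps = 1\<^sub>m (2*n)"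
    using eps_epsi epsi_eps one_perp_one[of m] unfolding m_def[symmetric] Suc_m
    by (simp_all add: one_perp_mult[OF eps_carrier epsi_carrier] one_perp_mult[OF epsi_carrier eps_carrier])
  then have "mat_inverse (transpose_mat (one_perp eps) * psi n * one_perp eps)
      = - (one_perp epsi * psi n * transpose_mat (one_perp epsi))"
    using one_perp_carrier[OF eps_carrier] one_perp_carrier[OF epsi_carrier]
    by (intro mat_inverse_congruence_of_square_root_of_minus_one) (simp_all add: Suc_m psi_squared)
  also have "\<dots> = - (transpose_mat (one_perp (transpose_mat epsi)) * psi n * one_perp (transpose_mat epsi))"
    using epsi_carrier by (simp add: transpose_one_perp)
  also have "\<dots> = - four_block_mat (0\<^sub>m 1 1) (first_unit_row m * transpose_mat epsi)
      (- (epsi * transpose_mat (first_unit_row m))) (epsi * psi_minor n * transpose_mat epsi)"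
    unfolding psi using epsi_carrier Psi by (subst one_perp_congruence[of "transpose_mat epsi" m]) auto
  finally have phi_inverse: "mat_inverse (transpose_mat (one_perp eps) * psi n * one_perp eps) = \<dots>" .
  have phi: "transpose_mat (one_perp eps) * psi n * one_perp eps
    = four_block_mat (0\<^sub>m 1 1) (first_unit_row m * eps)
      (- (transpose_mat eps * transpose_mat (first_unit_row m))) (transpose_mat eps * psi_minor n * eps)"
    unfolding psi using eps_carrier Psi by (subst one_perp_congruence[of eps m]) auto
  show ?thesis
    using eps eps_carrier epsi_carrier Psi eps_epsi epsi_eps psi_minor_identities[OF n] phi phi_inverse
    unfolding m_def[symmetric] by unfold_locales auto
qed

theorem lemma3p11:
  fixes n :: nat and eps phi :: "'a::comm_ring_1 mat"
  assumes "n \<ge> 1"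
    and "eps \<in> E_group (2*n - 1)"
    and "phi = transpose_mat (one_perp eps) * psi n * one_perp eps"
  shows "E_phi phi = E_group (2*n - 1)"
proof -
  obtain epsi where "epsi \<in> E_group (2*n - 1)" "eps * epsi = 1\<^sub>m (2*n - 1)" "epsi * eps = 1\<^sub>m (2*n - 1)"
    using E_group_inverse[OF assms(2)] by blast
  then interpret congruent_standard_form "2*n - 1" eps epsi "psi_minor n" phi
    unfolding assms(3) using assms(1,2) by (intro psi_congruence_standard_form) (auto intro: E_group_carrier)
  show ?thesis by (rule E_phi_eq_E_group)
qed

end
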